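(* Let $(a_i)_{i\ge1}$ be a real sequence. Then $(a_i)_{i\ge1}$ is convex if and only if $$\sum_{i=1}^n\big(a_{\lfloor p_i\rfloor}-a_{\lfloor q_i\rfloor}\big)\le\sum_{i=1}^n\big(\{q_i\}\,\Delta a_{\lfloor q_i\rfloor}-\{p_i\}\,\Delta a_{\lfloor p_i\rfloor}\big)$$ holds for all $n\ge2$ and all $(p_1,\dots,p_n),(q_1,\dots,q_n)\in[1,\infty)^n$ with $(p_1,\dots,p_n)\prec(q_1,\dots,q_n)$.
   Context: $\Delta a_i=a_{i+1}-a_i$; a sequence is convex if $(\Delta a_i)_{i\ge1}$ is non-decreasing. $\lfloor x\rfloor$ is the floor and $\{x\}=x-\lfloor x\rfloor$ the fractional part. For $x,y\in\mathbb{R}^n$, with $x_{[1]}\ge\dots\ge x_{[n]}$ and $y_{[1]}\ge\dots\ge y_{[n]}$ the components in decreasing order, $x\prec y$ ($y$ majorizes $x$) means $\sum_{i=1}^k x_{[i]}\le\sum_{i=1}^k y_{[i]}$ for $k=1,\dots,n-1$ and $\sum_{i=1}^n x_i=\sum_{i=1}^n y_i$. *)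

theory Defs
  imports Complex_Main
begin

text \<open>Sequences (a_i)_{i>=1} are modelled as functions nat => real; the value at 0 is ignored.\<close>

definition fdiff :: "(nat \<Rightarrow> real) \<Rightarrow> nat \<Rightarrow> real" where
  "fdiff a i = a (Suc i) - a i"

definition convex_seq :: "(nat \<Rightarrow> real) \<Rightarrow> bool" where
  "convex_seq a \<longleftrightarrow> (\<forall>i\<ge>1. fdiff a i \<le> fdiff a (Suc i))"

text \<open>Decreasing rearrangement of a vector given as a list; x_[k] is (decr x) ! (k-1).\<close>
definition decr :: "real list \<Rightarrow> real list" where
  "decr x = rev (sort x)"

definition majorized :: "real list \<Rightarrow> real list \<Rightarrow> bool" where
  "majorized x y \<longleftrightarrow> length x = length y \<and>
     (\<forall>k\<in>{1..<length x}. sum_list (take k (decr x)) \<le> sum_list (take k (decr y))) \<and>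
     sum_list x = sum_list y"

end

theory Submission
  imports Defs "HOL-Library.Multiset"
begin

text \<open>
  Let \<open>f x = a \<lfloor>x\<rfloor> + {x} \<Delta>a \<lfloor>x\<rfloor>\<close> be the piecewise linear interpolant of \<open>a\<close>; the
  inequality says exactly \<open>\<Sum> f(p\<^sub>i) \<le> \<Sum> f(q\<^sub>i)\<close>. On \<open>[1, \<infinity>)\<close>, \<open>f\<close> is an affine function plus
  \<open>\<Sum>\<^sub>k (\<Delta>a\<^sub>k - \<Delta>a\<^sub>k\<^sub>-\<^sub>1) max 0 (x - k)\<close>, and for convex \<open>a\<close> all these coefficients are
  nonnegative. Affine functions have equal sums on \<open>p\<close> and \<open>q\<close>, and for a hinge function
  \<open>max 0 (x - t)\<close> the sum over \<open>p\<close> is a partial sum \<open>\<Sum>\<^sub>i\<^sub>\<le>\<^sub>j p\<^sub>[\<^sub>i\<^sub>] - j t\<close> of the decreasing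
  rearrangement, which majorization bounds by the corresponding expression for \<open>q\<close>, itself at
  most the hinge sum over \<open>q\<close> (Karamata's inequality for hinges). Conversely, the pair
  \<open>p = (i+1, i+1) \<prec> q = (i+2, i)\<close> yields \<open>2 a\<^sub>i\<^sub>+\<^sub>1 \<le> a\<^sub>i + a\<^sub>i\<^sub>+\<^sub>2\<close>.
\<close>

lemma mset_decr [simp]: "mset (decr x) = mset x"
  by (simp add: decr_def)

lemma length_decr [simp]: "length (decr x) = length x"
  by (simp add: decr_def)

lemma sorted_wrt_decr: "sorted_wrt (\<ge>) (decr x)"
  by (simp add: decr_def sorted_wrt_rev)

lemma sum_list_map_decr:
  fixes h :: "real \<Rightarrow> 'a::comm_monoid_add"
  shows "sum_list (map h (decr x)) = sum_list (map h x)"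
proof -
  have "mset (map h (decr x)) = mset (map h x)"
    by simp
  then show ?thesis
    by (metis sum_mset_sum_list)
qed

lemma sum_list_decr: "sum_list (decr x) = sum_list x"
  using sum_list_map_decr[of "\<lambda>x. x"] by simp

lemma majorized_sum_take_decr_le:
  assumes "majorized x y" "k \<le> length x"
  shows "sum_list (take k (decr x)) \<le> sum_list (take k (decr y))"
proof (cases "0 < k \<and> k < length x")
  case True
  then show ?thesis using assms(1) by (auto simp: majorized_def)
next
  case False
  with assms have "k = 0 \<or> k = length x \<and> length y = length x"
    by (auto simp: majorized_def)
  then show ?thesis using assms(1) by (auto simp: majorized_def sum_list_decr)
qed

lemma sum_take_minus_le_sum_hinge:
  fixes z :: "real list"
  assumes "k \<le> length z"
  shows "sum_list (take k z) - real k * t \<le> sum_list (map (\<lambda>x. max 0 (x - t)) z)"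
proof -
  have "sum_list (take k z) - real k * t = sum_list (map (\<lambda>x. x - t) (take k z))"
    using assms by (simp add: sum_list_subtractf sum_list_triv)
  also have "\<dots> \<le> sum_list (map (\<lambda>x. max 0 (x - t)) (take k z))"
    by (rule sum_list_mono) simp
  also have "\<dots> \<le> sum_list (map (\<lambda>x. max 0 (x - t)) (take k z))
                 + sum_list (map (\<lambda>x. max 0 (x - t)) (drop k z))"
    using sum_list_nonneg[of "map (\<lambda>x. max 0 (x - t)) (drop k z)"] by fastforce
  also have "\<dots> = sum_list (map (\<lambda>x. max 0 (x - t)) z)"
    by (metis append_take_drop_id map_append sum_list_append)
  finally show ?thesis .
qed

lemma sorted_sum_hinge_eq_sum_take:
  fixes z :: "real list"
  assumes "sorted_wrt (\<ge>) z"
  obtains k where "k \<le> length z"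
    "sum_list (map (\<lambda>x. max 0 (x - t)) z) = sum_list (take k z) - real k * t"
proof
  let ?big = "\<lambda>x. x > t"
  define k where "k = length (takeWhile ?big z)"
  show "k \<le> length z"
    unfolding k_def by (rule length_takeWhile_le)
  have take_k: "take k z = takeWhile ?big z"
    unfolding k_def by (metis append_eq_conv_conj takeWhile_dropWhile_id)
  have small: "x \<le> t" if "x \<in> set (dropWhile ?big z)" for x
    using assms that
    by (induction z) (auto split: if_splits)
  have "sum_list (map (\<lambda>x. max 0 (x - t)) z)
      = sum_list (map (\<lambda>x. max 0 (x - t)) (takeWhile ?big z))
        + sum_list (map (\<lambda>x. max 0 (x - t)) (dropWhile ?big z))"
    by (metis map_append sum_list_append takeWhile_dropWhile_id)
  also have "map (\<lambda>x. max 0 (x - t)) (dropWhile ?big z) = map (\<lambda>_. 0) (dropWhile ?big z)"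
    using small by simp
  also have "map (\<lambda>x. max 0 (x - t)) (takeWhile ?big z) = map (\<lambda>x. x - t) (takeWhile ?big z)"
    by (auto dest: set_takeWhileD)
  finally have "sum_list (map (\<lambda>x. max 0 (x - t)) z) = sum_list (takeWhile ?big z) - real k * t"
    by (simp add: k_def sum_list_subtractf sum_list_triv)
  then show "sum_list (map (\<lambda>x. max 0 (x - t)) z) = sum_list (take k z) - real k * t"
    by (simp only: take_k)
qed

theorem majorized_sum_hinge_le:
  assumes "majorized x y"
  shows "sum_list (map (\<lambda>u. max 0 (u - t)) x) \<le> sum_list (map (\<lambda>u. max 0 (u - t)) y)"
proof -
  have len: "length x = length y"
    using assms by (simp add: majorized_def)
  obtain k where k: "k \<le> length x"
    "sum_list (map (\<lambda>u. max 0 (u - t)) (decr x)) = sum_list (take k (decr x)) - real k * t"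
    using sorted_sum_hinge_eq_sum_take[OF sorted_wrt_decr] by (metis length_decr)
  have "sum_list (map (\<lambda>u. max 0 (u - t)) x) = sum_list (take k (decr x)) - real k * t"
    using k(2) by (simp add: sum_list_map_decr)
  also have "\<dots> \<le> sum_list (take k (decr y)) - real k * t"
    using majorized_sum_take_decr_le[OF assms k(1)] by simp
  also have "\<dots> \<le> sum_list (map (\<lambda>u. max 0 (u - t)) (decr y))"
    by (rule sum_take_minus_le_sum_hinge) (use k(1) len in simp)
  finally show ?thesis
    by (simp add: sum_list_map_decr)
qed

definition lin_interp :: "(nat \<Rightarrow> real) \<Rightarrow> real \<Rightarrow> real" where
  "lin_interp a x = a (nat \<lfloor>x\<rfloor>) + frac x * fdiff a (nat \<lfloor>x\<rfloor>)"

lemma lin_interp_of_nat [simp]: "lin_interp a (real j) = a j"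
  by (simp add: lin_interp_def)

lemma affine_plus_hinges_telescope:
  fixes a :: "nat \<Rightarrow> real"
  assumes "1 \<le> m"
  shows "a 1 + fdiff a 1 * (x - 1)
           + (\<Sum>k\<in>{1..<m}. (fdiff a (Suc k) - fdiff a k) * (x - real (Suc k)))
         = a m + fdiff a m * (x - real m)"
  using assms
proof (induction m rule: dec_induct)
  case base
  then show ?case by simp
next
  case (step m)
  have "{1..<Suc m} = insert m {1..<m}"
    using step.hyps by auto
  then have "(\<Sum>k\<in>{1..<Suc m}. (fdiff a (Suc k) - fdiff a k) * (x - real (Suc k)))
      = (fdiff a (Suc m) - fdiff a m) * (x - real (Suc m))
        + (\<Sum>k\<in>{1..<m}. (fdiff a (Suc k) - fdiff a k) * (x - real (Suc k)))"
    by simp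
  with step.IH show ?case
    by (simp add: fdiff_def algebra_simps)
qed

lemma lin_interp_hinge_expansion:
  fixes a :: "nat \<Rightarrow> real"
  assumes "1 \<le> x" "nat \<lfloor>x\<rfloor> \<le> N"
  shows "lin_interp a x = a 1 + fdiff a 1 * (x - 1)
           + (\<Sum>k\<in>{1..<N}. (fdiff a (Suc k) - fdiff a k) * max 0 (x - real (Suc k)))"
proof -
  define m where "m = nat \<lfloor>x\<rfloor>"
  have m: "1 \<le> m" "real m \<le> x" "x < real m + 1" "frac x = x - real m"
    using assms(1) by (auto simp: m_def frac_def) linarith+
  have "(\<Sum>k\<in>{1..<N}. (fdiff a (Suc k) - fdiff a k) * max 0 (x - real (Suc k)))
      = (\<Sum>k\<in>{1..<m}. (fdiff a (Suc k) - fdiff a k) * max 0 (x - real (Suc k)))"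
    using assms(2) m(3) unfolding m_def[symmetric]
    by (intro sum.mono_neutral_right) auto
  also have "\<dots> = (\<Sum>k\<in>{1..<m}. (fdiff a (Suc k) - fdiff a k) * (x - real (Suc k)))"
    using m(2) by (intro sum.cong) auto
  moreover have "lin_interp a x = a m + fdiff a m * (x - real m)"
    using m(4) by (simp add: lin_interp_def m_def[symmetric])
  ultimately show ?thesis
    using affine_plus_hinges_telescope[OF m(1), of a x] by simp
qed

lemma sum_list_map_sum:
  "sum_list (map (\<lambda>x. \<Sum>k\<in>K. f k x) xs) = (\<Sum>k\<in>K. sum_list (map (f k) xs))"
  by (induction xs) (simp_all add: sum.distrib)

theorem majorized_sum_lin_interp_le:
  fixes a :: "nat \<Rightarrow> real"
  assumes convex: "convex_seq a" and maj: "majorized p q"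
    and ge1: "\<forall>x\<in>set p. 1 \<le> x" "\<forall>x\<in>set q. 1 \<le> x"
  shows "sum_list (map (lin_interp a) p) \<le> sum_list (map (lin_interp a) q)"
proof -
  define N where "N = sum_list (map (\<lambda>x. nat \<lfloor>x\<rfloor>) (p @ q))"
  define c where "c k = fdiff a (Suc k) - fdiff a k" for k
  define hinge where "hinge k x = max 0 (x - real (Suc k))" for k x
  have sum_interp: "sum_list (map (lin_interp a) r)
      = real (length r) * (a 1 - fdiff a 1) + fdiff a 1 * sum_list r
        + (\<Sum>k\<in>{1..<N}. c k * sum_list (map (hinge k) r))"
    if "\<forall>x\<in>set r. 1 \<le> x" "set r \<subseteq> set (p @ q)" for r
  proof -
    have "sum_list (map (lin_interp a) r)
        = sum_list (map (\<lambda>x. (a 1 - fdiff a 1) + fdiff a 1 * x + (\<Sum>k\<in>{1..<N}. c k * hinge k x)) r)"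
    proof (intro arg_cong[where f = sum_list] map_cong refl)
      fix x assume x: "x \<in> set r"
      have "nat \<lfloor>x\<rfloor> \<le> N"
        unfolding N_def using x that(2) by (intro member_le_sum_list) auto
      then show "lin_interp a x
          = (a 1 - fdiff a 1) + fdiff a 1 * x + (\<Sum>k\<in>{1..<N}. c k * hinge k x)"
        using lin_interp_hinge_expansion x that(1)
        by (simp add: c_def hinge_def algebra_simps)
    qed
    then show ?thesis
      by (simp add: sum_list_addf sum_list_const_mult sum_list_triv sum_list_map_sum)
  qed
  have "(\<Sum>k\<in>{1..<N}. c k * sum_list (map (hinge k) p))
      \<le> (\<Sum>k\<in>{1..<N}. c k * sum_list (map (hinge k) q))"
  proof (rule sum_mono)
    fix k assume "k \<in> {1..<N}"
    then have "0 \<le> c k"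
      using convex by (simp add: convex_seq_def c_def)
    moreover have "sum_list (map (hinge k) p) \<le> sum_list (map (hinge k) q)"
      unfolding hinge_def by (rule majorized_sum_hinge_le[OF maj])
    ultimately show "c k * sum_list (map (hinge k) p) \<le> c k * sum_list (map (hinge k) q)"
      by (rule mult_left_mono[rotated])
  qed
  moreover have "length p = length q" "sum_list p = sum_list q"
    using maj by (simp_all add: majorized_def)
  ultimately show ?thesis
    using sum_interp[of p] sum_interp[of q] ge1 by simp
qed

lemma convex_seq_if_two_point_majorization:
  fixes a :: "nat \<Rightarrow> real"
  assumes "\<And>p q. length p = 2 \<Longrightarrow> length q = 2 \<Longrightarrow> \<forall>x\<in>set p. 1 \<le> x \<Longrightarrow> \<forall>x\<in>set q. 1 \<le> x
             \<Longrightarrow> majorized p q \<Longrightarrow> sum_list (map (lin_interp a) p) \<le> sum_list (map (lin_interp a) q)"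
  shows "convex_seq a"
  unfolding convex_seq_def
proof (intro allI impI)
  fix i :: nat assume i: "1 \<le> i"
  let ?p = "[real (Suc i), real (Suc i)]" and ?q = "[real (Suc (Suc i)), real i]"
  have "majorized ?p ?q"
    by (simp add: majorized_def decr_def)
  then have "sum_list (map (lin_interp a) ?p) \<le> sum_list (map (lin_interp a) ?q)"
    using i by (intro assms) auto
  then have "a (Suc i) + a (Suc i) \<le> a (Suc (Suc i)) + a i"
    by (simp only: list.map lin_interp_of_nat sum_list_simps add_0_right)
  then show "fdiff a i \<le> fdiff a (Suc i)"
    by (simp add: fdiff_def)
qed

lemma floor_frac_inequality_iff_sum_lin_interp_le:
  fixes a :: "nat \<Rightarrow> real"
  assumes "length p = n" "length q = n"
  shows "(\<Sum>i<n. a (nat \<lfloor>p ! i\<rfloor>) - a (nat \<lfloor>q ! i\<rfloor>))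
           \<le> (\<Sum>i<n. frac (q ! i) * fdiff a (nat \<lfloor>q ! i\<rfloor>) - frac (p ! i) * fdiff a (nat \<lfloor>p ! i\<rfloor>))
         \<longleftrightarrow> sum_list (map (lin_interp a) p) \<le> sum_list (map (lin_interp a) q)"
  using assms
  by (simp add: sum_list_sum_nth atLeast0LessThan lin_interp_def sum_subtractf sum.distrib,
      linarith)

theorem theorem4p7:
  fixes a :: "nat \<Rightarrow> real"
  shows "convex_seq a \<longleftrightarrow>
    (\<forall>n\<ge>2. \<forall>p q :: real list.
       length p = n \<and> length q = n \<and> (\<forall>x\<in>set p. 1 \<le> x) \<and> (\<forall>x\<in>set q. 1 \<le> x)
       \<and> majorized p q \<longrightarrow>
       (\<Sum>i<n. a (nat \<lfloor>p ! i\<rfloor>) - a (nat \<lfloor>q ! i\<rfloor>))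
         \<le> (\<Sum>i<n. frac (q ! i) * fdiff a (nat \<lfloor>q ! i\<rfloor>) - frac (p ! i) * fdiff a (nat \<lfloor>p ! i\<rfloor>)))"
  (is "_ \<longleftrightarrow> ?rhs")
proof -
  have "?rhs \<longleftrightarrow> (\<forall>n\<ge>2. \<forall>p q :: real list.
       length p = n \<and> length q = n \<and> (\<forall>x\<in>set p. 1 \<le> x) \<and> (\<forall>x\<in>set q. 1 \<le> x)
       \<and> majorized p q \<longrightarrow> sum_list (map (lin_interp a) p) \<le> sum_list (map (lin_interp a) q))"
    by (simp add: floor_frac_inequality_iff_sum_lin_interp_le)
  also have "\<dots> \<longleftrightarrow> convex_seq a"
    using majorized_sum_lin_interp_le convex_seq_if_two_point_majorization by fastforce
  finally show ?thesis ..
qed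

end
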